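(* $str(Q_2)=6$, $str(Q_3)=11$, $str(Q_4)=21$ and $str(Q_5)=40$.
   Context: $Q_n$ is the $n$-dimensional hypercube (vertex set $\mathbb Z_2^n$, adjacency iff differing in exactly one coordinate), of order $2^n$. For a graph $G$ of order $p$, a numbering is a bijection $f:V(G)\to[1,p]$; $str_f(G)=\max\{f(u)+f(v): uv\in E(G)\}$ and $str(G)=\min_f str_f(G)$. *)

theory Defs
  imports Main
begin

definition numbering :: "'a set \<Rightarrow> ('a \<Rightarrow> nat) \<Rightarrow> bool" where
  "numbering V f \<longleftrightarrow> bij_betw f V {1..card V}"

definition str_f :: "'a set \<Rightarrow> ('a \<Rightarrow> 'a \<Rightarrow> bool) \<Rightarrow> ('a \<Rightarrow> nat) \<Rightarrow> nat" where
  "str_f V E f = Max {f u + f v | u v. u \<in> V \<and> v \<in> V \<and> E u v}"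

definition strength :: "'a set \<Rightarrow> ('a \<Rightarrow> 'a \<Rightarrow> bool) \<Rightarrow> nat" where
  "strength V E = Min {str_f V E f | f. numbering V f}"

definition cube_V :: "nat \<Rightarrow> bool list set" where
  "cube_V n = {xs. length xs = n}"

definition cube_E :: "nat \<Rightarrow> bool list \<Rightarrow> bool list \<Rightarrow> bool" where
  "cube_E n xs ys \<longleftrightarrow> card {i. i < n \<and> xs ! i \<noteq> ys ! i} = 1"

end

theory Submission
  imports Defs
begin

text \<open>Upper bounds come from explicit numberings, verified by simplification. For the lower bounds,
  suppose every edge sum is at most \<open>s\<close>: then the neighbours of vertices labelled at least
  \<open>c\<close> carry distinct labels at most \<open>s - c\<close>. In \<open>Q\<^sub>n\<close> every vertex has \<open>n\<close> neighbours,
  two distinct vertices share at most two neighbours, and three vertices that pairwise share a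
  neighbour have a common neighbour. Hence the neighbourhoods of the vertices with the top one
  (\<open>n = 2, 3\<close>), two (\<open>n = 4\<close>) or three (\<open>n = 5\<close>) labels are too large for
  \<open>s = 2\<^sup>n + n - 1\<close>, \<open>20\<close> and \<open>39\<close> respectively.\<close>

section \<open>Strength of finite graphs\<close>

lemma finite_edge_sums:
  "finite V \<Longrightarrow> finite {f u + f v |u v. u \<in> V \<and> v \<in> V \<and> E u v}"
  by (rule finite_subset[of _ "(\<lambda>(u, v). f u + f v) ` (V \<times> V)"]) auto

lemma edge_sum_le_str_f:
  assumes "finite V" "u \<in> V" "v \<in> V" "E u v"
  shows "f u + f v \<le> str_f V E f"
  unfolding str_f_def using assms finite_edge_sums by (intro Max_ge) auto

lemma str_f_le:
  assumes "finite V" "u0 \<in> V" "v0 \<in> V" "E u0 v0"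
    and "\<And>u v. u \<in> V \<Longrightarrow> v \<in> V \<Longrightarrow> E u v \<Longrightarrow> f u + f v \<le> s"
  shows "str_f V E f \<le> s"
  unfolding str_f_def using assms finite_edge_sums by (subst Max_le_iff) auto

lemma numbering_range: "numbering V f \<Longrightarrow> v \<in> V \<Longrightarrow> f v \<in> {1..card V}"
  unfolding numbering_def by (rule bij_betw_apply)

lemma numbering_surj: "numbering V f \<Longrightarrow> k \<in> {1..card V} \<Longrightarrow> \<exists>v\<in>V. f v = k"
  unfolding numbering_def bij_betw_def by (metis imageE)

lemma card_le_if_numbering_le:
  assumes "numbering V f" "U \<subseteq> V" "\<And>u. u \<in> U \<Longrightarrow> f u \<le> k"
  shows "card U \<le> k"
proof -
  have "inj_on f U"
    using assms(1,2) unfolding numbering_def bij_betw_def by (meson inj_on_subset)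
  then have "card U = card (f ` U)"
    by (simp add: card_image)
  also have "\<dots> \<le> card {1..k}"
    using assms numbering_range by (intro card_mono) force+
  finally show ?thesis
    by simp
qed

text \<open>No edge is needed: for an edgeless graph every \<open>str_f\<close> is the unspecified \<open>Max {}\<close>.\<close>

lemma finite_str_f_values:
  assumes "finite V"
  shows "finite {str_f V E f |f. numbering V f}"
proof (rule finite_subset)
  show "{str_f V E f |f. numbering V f} \<subseteq> Max ` Pow {..2 * card V}"
  proof clarify
    fix f assume "numbering V f"
    then have "{f u + f v |u v. u \<in> V \<and> v \<in> V \<and> E u v} \<subseteq> {..2 * card V}"
      using numbering_range[OF \<open>numbering V f\<close>] by (force simp: mult_2 intro: add_mono)
    then show "str_f V E f \<in> Max ` Pow {..2 * card V}"
      unfolding str_f_def by blast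
  qed
qed simp

lemma strength_eqI:
  assumes "finite V" "numbering V g" "str_f V E g \<le> s"
    and "\<And>f. numbering V f \<Longrightarrow> s \<le> str_f V E f"
  shows "strength V E = s"
  unfolding strength_def
proof (rule Min_eqI)
  show "s \<in> {str_f V E f |f. numbering V f}"
    using assms(2-4) le_antisym by blast
qed (use assms(1,4) finite_str_f_values in auto)

section \<open>Neighbourhoods in the hypercube\<close>

definition flip :: "bool list \<Rightarrow> nat \<Rightarrow> bool list" where
  "flip x i = x[i := \<not> x ! i]"

definition diff_coords :: "nat \<Rightarrow> bool list \<Rightarrow> bool list \<Rightarrow> nat set" where
  "diff_coords n x y = {i. i < n \<and> x ! i \<noteq> y ! i}"

definition cube_nbrs :: "nat \<Rightarrow> bool list \<Rightarrow> bool list set" where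
  "cube_nbrs n x = {y \<in> cube_V n. cube_E n x y}"

lemma length_flip [simp]: "length (flip x i) = length x"
  by (simp add: flip_def)

lemma flip_in_cube_V [simp]: "x \<in> cube_V n \<Longrightarrow> flip x i \<in> cube_V n"
  by (simp add: cube_V_def)

lemma finite_cube_V: "finite (cube_V n)"
  using finite_lists_length_eq[of "UNIV :: bool set" n] by (simp add: cube_V_def)

lemma card_cube_V: "card (cube_V n) = 2 ^ n"
  using card_lists_length_eq[of "UNIV :: bool set" n] by (simp add: cube_V_def card_UNIV_bool)

lemma cube_E_iff_diff_coords: "cube_E n x y \<longleftrightarrow> (\<exists>i. diff_coords n x y = {i})"
  by (simp add: cube_E_def diff_coords_def card_1_singleton_iff)

lemma diff_coords_subset: "diff_coords n x y \<subseteq> {..<n}"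
  by (auto simp: diff_coords_def)

lemma diff_coords_eq_empty_iff:
  "x \<in> cube_V n \<Longrightarrow> y \<in> cube_V n \<Longrightarrow> diff_coords n x y = {} \<longleftrightarrow> x = y"
  by (auto simp: diff_coords_def cube_V_def intro: nth_equalityI)

lemma diff_coords_flip:
  "x \<in> cube_V n \<Longrightarrow> m < n \<Longrightarrow>
    diff_coords n y (flip x m) = sym_diff (diff_coords n y x) {m}"
  by (auto simp: diff_coords_def cube_V_def flip_def nth_list_update)

lemma diff_coords_self_flip: "x \<in> cube_V n \<Longrightarrow> m < n \<Longrightarrow> diff_coords n x (flip x m) = {m}"
  using diff_coords_flip[of x n m x] by (simp add: diff_coords_def)

lemma diff_coords_commute: "diff_coords n x y = diff_coords n y x"
  by (auto simp: diff_coords_def)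

lemma diff_coords_symdiff:
  "diff_coords n x y = sym_diff (diff_coords n z x) (diff_coords n z y)"
  by (auto simp: diff_coords_def)

lemma cube_E_iff_flip:
  assumes x: "x \<in> cube_V n" and y: "y \<in> cube_V n"
  shows "cube_E n x y \<longleftrightarrow> (\<exists>i<n. y = flip x i)"
proof
  assume "cube_E n x y"
  then obtain i where i: "diff_coords n x y = {i}"
    by (auto simp: cube_E_iff_diff_coords)
  then have "i < n"
    using diff_coords_subset by blast
  then have "diff_coords n y (flip x i) = {}"
    using diff_coords_symdiff[of n y "flip x i" x] i diff_coords_self_flip[OF x] by simp
  then show "\<exists>i<n. y = flip x i"
    using x y \<open>i < n\<close> diff_coords_eq_empty_iff by fastforce
next
  assume "\<exists>i<n. y = flip x i"
  then show "cube_E n x y"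
    using x diff_coords_self_flip by (auto simp: cube_E_iff_diff_coords)
qed

lemma cube_E_flip: "x \<in> cube_V n \<Longrightarrow> i < n \<Longrightarrow> cube_E n x (flip x i)"
  by (subst cube_E_iff_flip) auto

lemma cube_nbrs_eq_image_flip: "x \<in> cube_V n \<Longrightarrow> cube_nbrs n x = flip x ` {..<n}"
  by (auto simp: cube_nbrs_def cube_E_iff_flip)

lemma finite_cube_nbrs: "finite (cube_nbrs n x)"
  using finite_cube_V by (rule finite_subset[rotated]) (auto simp: cube_nbrs_def)

lemma card_cube_nbrs:
  assumes x: "x \<in> cube_V n"
  shows "card (cube_nbrs n x) = n"
proof -
  have "inj_on (flip x) {..<n}"
  proof (rule inj_onI)
    fix i j assume "i \<in> {..<n}" "j \<in> {..<n}" "flip x i = flip x j"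
    then show "i = j"
      using diff_coords_self_flip[OF x] by (metis lessThan_iff singleton_inject)
  qed
  then show ?thesis
    by (simp add: cube_nbrs_eq_image_flip[OF x] card_image)
qed

lemma common_cube_nbr:
  assumes x: "x \<in> cube_V n" and "y \<in> cube_V n" "x \<noteq> y"
    and w: "w \<in> cube_nbrs n x" "w \<in> cube_nbrs n y"
  shows "\<exists>i j. i \<noteq> j \<and> diff_coords n x y = {i, j} \<and> w = flip x i"
proof -
  obtain i where i: "diff_coords n w x = {i}"
    using w(1) by (auto simp: cube_nbrs_def cube_E_iff_diff_coords diff_coords_def)
  obtain j where j: "diff_coords n w y = {j}"
    using w(2) by (auto simp: cube_nbrs_def cube_E_iff_diff_coords diff_coords_def)
  have "diff_coords n x y = sym_diff {i} {j}"
    using diff_coords_symdiff[of n x y w] i j by simp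
  moreover have "diff_coords n x y \<noteq> {}"
    using assms(1-3) diff_coords_eq_empty_iff by blast
  ultimately have ij: "i \<noteq> j" and xy: "diff_coords n x y = {i, j}"
    by auto
  obtain k where "k < n" "w = flip x k"
    using w(1) cube_nbrs_eq_image_flip[OF x] by auto
  moreover have "diff_coords n w x = diff_coords n x w"
    by (rule diff_coords_commute)
  ultimately have "w = flip x i"
    using i diff_coords_self_flip[OF x] by simp
  then show ?thesis
    using ij xy by blast
qed

lemma card_common_cube_nbrs_le_2:
  assumes "x \<in> cube_V n" "y \<in> cube_V n" "x \<noteq> y"
  shows "card (cube_nbrs n x \<inter> cube_nbrs n y) \<le> 2"
proof (cases "cube_nbrs n x \<inter> cube_nbrs n y = {}")
  case False
  then obtain i j where "i \<noteq> j" "diff_coords n x y = {i, j}"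
    using common_cube_nbr[OF assms] by blast
  moreover have "cube_nbrs n x \<inter> cube_nbrs n y \<subseteq> flip x ` diff_coords n x y"
    using common_cube_nbr[OF assms] by fastforce
  ultimately have "card (cube_nbrs n x \<inter> cube_nbrs n y) \<le> card (flip x ` {i, j})"
    by (intro card_mono) auto
  also have "\<dots> \<le> 2"
    using card_image_le[of "{i, j}" "flip x"] \<open>i \<noteq> j\<close> by simp
  finally show ?thesis .
qed simp

lemma common_cube_nbr_of_three:
  assumes V: "x \<in> cube_V n" "y \<in> cube_V n" "z \<in> cube_V n"
    and distinct: "x \<noteq> y" "x \<noteq> z" "y \<noteq> z"
    and "cube_nbrs n x \<inter> cube_nbrs n y \<noteq> {}" "cube_nbrs n x \<inter> cube_nbrs n z \<noteq> {}"
      "cube_nbrs n y \<inter> cube_nbrs n z \<noteq> {}"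
  shows "cube_nbrs n x \<inter> cube_nbrs n y \<inter> cube_nbrs n z \<noteq> {}"
proof -
  obtain i j where ij: "i \<noteq> j" "diff_coords n x y = {i, j}"
    using common_cube_nbr assms by blast
  obtain k l where kl: "k \<noteq> l" "diff_coords n x z = {k, l}"
    using common_cube_nbr assms by blast
  obtain p q where pq: "p \<noteq> q" "diff_coords n y z = {p, q}"
    using common_cube_nbr assms by blast
  have "diff_coords n x y \<inter> diff_coords n x z \<noteq> {}"
  proof
    assume "diff_coords n x y \<inter> diff_coords n x z = {}"
    then have "card (diff_coords n y z) = 4"
      using diff_coords_symdiff[of n y z x] ij kl by (auto simp: card_insert_if)
    then show False
      using pq by simp
  qed
  then obtain m where m: "m \<in> diff_coords n x y" "m \<in> diff_coords n x z"
    by blast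
  then have "m < n"
    using diff_coords_subset by blast
  have "flip x m \<in> cube_nbrs n u" if "u \<in> cube_V n" "diff_coords n x u = {m, i'}" "m \<noteq> i'"
    for u i'
  proof -
    have "diff_coords n u (flip x m) = {i'}"
      using that diff_coords_flip[OF V(1) \<open>m < n\<close>, of u] diff_coords_commute[of n u x] by auto
    then show ?thesis
      using V(1) that(1) by (auto simp: cube_nbrs_def cube_E_iff_diff_coords)
  qed
  moreover have "flip x m \<in> cube_nbrs n x"
    using V(1) \<open>m < n\<close> diff_coords_self_flip by (auto simp: cube_nbrs_def cube_E_iff_diff_coords)
  ultimately have "flip x m \<in> cube_nbrs n x \<inter> cube_nbrs n y \<inter> cube_nbrs n z"
    using V ij kl m by (auto simp: insert_commute)
  then show ?thesis
    by blast
qed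

section \<open>Lower bounds\<close>

lemma card_Un3:
  assumes "finite A" "finite B" "finite C"
  shows "card (A \<union> B \<union> C) + card (A \<inter> B) + card (A \<inter> C) + card (B \<inter> C)
    = card A + card B + card C + card (A \<inter> B \<inter> C)"
proof -
  have "card (A \<union> B) + card C = card (A \<union> B \<union> C) + card ((A \<inter> C) \<union> (B \<inter> C))"
    using card_Un_Int[of "A \<union> B" C] assms by (simp add: Int_Un_distrib2)
  moreover have "card (A \<inter> C) + card (B \<inter> C) = card ((A \<inter> C) \<union> (B \<inter> C)) + card (A \<inter> B \<inter> C)"
    using card_Un_Int[of "A \<inter> C" "B \<inter> C"] assms by (simp add: Int_ac)
  moreover have "card A + card B = card (A \<union> B) + card (A \<inter> B)"
    using card_Un_Int assms by blast
  ultimately show ?thesis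
    by linarith
qed

lemma card_nbrs_of_high_labels:
  assumes f: "numbering (cube_V n) f" and X: "X \<subseteq> cube_V n" "\<And>x. x \<in> X \<Longrightarrow> c \<le> f x"
  shows "card (\<Union>x\<in>X. cube_nbrs n x) \<le> str_f (cube_V n) (cube_E n) f - c"
proof (rule card_le_if_numbering_le[OF f])
  show "(\<Union>x\<in>X. cube_nbrs n x) \<subseteq> cube_V n"
    by (auto simp: cube_nbrs_def)
  fix w assume "w \<in> (\<Union>x\<in>X. cube_nbrs n x)"
  then obtain x where "x \<in> X" "w \<in> cube_V n" "cube_E n x w"
    by (auto simp: cube_nbrs_def)
  then have "f x + f w \<le> str_f (cube_V n) (cube_E n) f"
    using X(1) by (intro edge_sum_le_str_f[OF finite_cube_V]) auto
  then show "f w \<le> str_f (cube_V n) (cube_E n) f - c"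
    using X(2)[OF \<open>x \<in> X\<close>] by linarith
qed

lemma cube_vertex_with_label:
  "numbering (cube_V n) f \<Longrightarrow> 1 \<le> k \<Longrightarrow> k \<le> 2 ^ n \<Longrightarrow> \<exists>x\<in>cube_V n. f x = k"
  using numbering_surj card_cube_V by fastforce

lemma str_f_cube_ge:
  assumes f: "numbering (cube_V n) f" and "1 \<le> n"
  shows "2 ^ n + n \<le> str_f (cube_V n) (cube_E n) f"
proof -
  obtain a where a: "a \<in> cube_V n" "f a = 2 ^ n"
    using cube_vertex_with_label[OF f, of "2 ^ n"] by auto
  have "n \<le> str_f (cube_V n) (cube_E n) f - 2 ^ n"
    using card_nbrs_of_high_labels[OF f, of "{a}" "2 ^ n"] a card_cube_nbrs by simp
  then show ?thesis
    using \<open>1 \<le> n\<close> by linarith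
qed

lemma str_f_cube4_ge:
  assumes f: "numbering (cube_V 4) f"
  shows "21 \<le> str_f (cube_V 4) (cube_E 4) f"
proof (rule ccontr)
  assume "\<not> ?thesis"
  then have small: "str_f (cube_V 4) (cube_E 4) f \<le> 20"
    by simp
  obtain a where a: "a \<in> cube_V 4" "f a = 16"
    using cube_vertex_with_label[OF f, of 16] by auto
  obtain b where b: "b \<in> cube_V 4" "f b = 15"
    using cube_vertex_with_label[OF f, of 15] by auto
  let ?A = "cube_nbrs 4 a" and ?B = "cube_nbrs 4 b"
  have "card (\<Union>x\<in>{a, b}. cube_nbrs 4 x) \<le> str_f (cube_V 4) (cube_E 4) f - 15"
    by (rule card_nbrs_of_high_labels[OF f]) (use a b in auto)
  then have "card (?A \<union> ?B) \<le> 5"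
    using small by simp
  moreover have "card ?A + card ?B = card (?A \<union> ?B) + card (?A \<inter> ?B)"
    using card_Un_Int finite_cube_nbrs by blast
  moreover have "card (?A \<inter> ?B) \<le> 2"
    using card_common_cube_nbrs_le_2 a b by fastforce
  ultimately show False
    using card_cube_nbrs a(1) b(1) by simp
qed

lemma str_f_cube5_ge:
  assumes f: "numbering (cube_V 5) f"
  shows "40 \<le> str_f (cube_V 5) (cube_E 5) f"
proof (rule ccontr)
  assume "\<not> ?thesis"
  then have small: "str_f (cube_V 5) (cube_E 5) f \<le> 39"
    by simp
  obtain a where a: "a \<in> cube_V 5" "f a = 32"
    using cube_vertex_with_label[OF f, of 32] by auto
  obtain b where b: "b \<in> cube_V 5" "f b = 31"
    using cube_vertex_with_label[OF f, of 31] by auto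
  obtain c where c: "c \<in> cube_V 5" "f c = 30"
    using cube_vertex_with_label[OF f, of 30] by auto
  have distinct: "a \<noteq> b" "a \<noteq> c" "b \<noteq> c"
    using a b c by auto
  let ?A = "cube_nbrs 5 a" and ?B = "cube_nbrs 5 b" and ?C = "cube_nbrs 5 c"
  have "card (\<Union>x\<in>{a, b, c}. cube_nbrs 5 x) \<le> str_f (cube_V 5) (cube_E 5) f - 30"
    by (rule card_nbrs_of_high_labels[OF f]) (use a b c in auto)
  then have "card (?A \<union> ?B \<union> ?C) \<le> 9"
    using small by (simp add: Un_assoc)
  moreover have "card (?A \<union> ?B \<union> ?C) + card (?A \<inter> ?B) + card (?A \<inter> ?C) + card (?B \<inter> ?C)
      = 15 + card (?A \<inter> ?B \<inter> ?C)"
    using card_Un3[of ?A ?B ?C] finite_cube_nbrs card_cube_nbrs[OF a(1)] card_cube_nbrs[OF b(1)]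
      card_cube_nbrs[OF c(1)] by simp
  moreover have "card (?A \<inter> ?B) \<le> 2" "card (?A \<inter> ?C) \<le> 2" "card (?B \<inter> ?C) \<le> 2"
    using card_common_cube_nbrs_le_2 a(1) b(1) c(1) distinct by blast+
  ultimately have "card (?A \<inter> ?B) = 2" "card (?A \<inter> ?C) = 2" "card (?B \<inter> ?C) = 2"
    and "card (?A \<inter> ?B \<inter> ?C) = 0"
    by linarith+
  then have "?A \<inter> ?B \<noteq> {}" "?A \<inter> ?C \<noteq> {}" "?B \<inter> ?C \<noteq> {}" and "?A \<inter> ?B \<inter> ?C = {}"
    using finite_cube_nbrs by auto
  then show False
    using common_cube_nbr_of_three[OF a(1) b(1) c(1) distinct] by blast
qed

section \<open>Explicit numberings\<close>

lemma set_n_lists_bool: "set (List.n_lists n [False, True]) = cube_V n"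
  by (auto simp: set_n_lists cube_V_def)

lemma strength_cube_eqI:
  assumes "1 \<le> n"
    and "sort (map g (List.n_lists n [False, True])) = [1..<2 ^ n + 1]"
    and "\<forall>x\<in>set (List.n_lists n [False, True]). \<forall>i\<in>set [0..<n]. g x + g (flip x i) \<le> s"
    and "\<And>f. numbering (cube_V n) f \<Longrightarrow> s \<le> str_f (cube_V n) (cube_E n) f"
  shows "strength (cube_V n) (cube_E n) = s"
proof (rule strength_eqI[OF finite_cube_V _ _ assms(4)])
  have "distinct (map g (List.n_lists n [False, True]))"
    using assms(2) by (metis distinct_sort distinct_upt)
  then have "inj_on g (cube_V n)"
    by (simp add: distinct_map set_n_lists_bool)
  moreover have "g ` cube_V n = set [1..<2 ^ n + 1]"
    using arg_cong[OF assms(2), of set] by (simp add: set_n_lists_bool)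
  moreover have "set [1..<2 ^ n + 1] = {1..2 ^ n}"
    by auto
  ultimately show "numbering (cube_V n) g"
    by (simp add: numbering_def bij_betw_def card_cube_V)
  let ?x0 = "replicate n False"
  show "str_f (cube_V n) (cube_E n) g \<le> s"
  proof (rule str_f_le[OF finite_cube_V])
    show x0: "?x0 \<in> cube_V n"
      by (simp add: cube_V_def)
    then show "flip ?x0 0 \<in> cube_V n" "cube_E n ?x0 (flip ?x0 0)"
      using \<open>1 \<le> n\<close> by (simp_all add: cube_E_flip)
    fix u v assume "u \<in> cube_V n" "v \<in> cube_V n" "cube_E n u v"
    then obtain i where "i < n" "v = flip u i"
      by (auto simp: cube_E_iff_flip)
    then show "g u + g v \<le> s"
      using assms(3) \<open>u \<in> cube_V n\<close> by (simp add: set_n_lists_bool)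
  qed
qed

definition list_numbering :: "nat list \<Rightarrow> bool list \<Rightarrow> nat" where
  "list_numbering ls x = ls ! horner_sum of_bool 2 x"

lemma strength_Q2: "strength (cube_V 2) (cube_E 2) = 6"
proof (rule strength_cube_eqI[where g = "list_numbering [1, 4, 3, 2]"])
  show "6 \<le> str_f (cube_V 2) (cube_E 2) f" if "numbering (cube_V 2) f" for f
    using str_f_cube_ge[OF that] by simp
qed (simp_all add: list_numbering_def flip_def numeral_eq_Suc upt_rec)

lemma strength_Q3: "strength (cube_V 3) (cube_E 3) = 11"
proof (rule strength_cube_eqI[where g = "list_numbering [8, 2, 1, 7, 3, 5, 6, 4]"])
  show "11 \<le> str_f (cube_V 3) (cube_E 3) f" if "numbering (cube_V 3) f" for f
    using str_f_cube_ge[OF that] by simp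
qed (simp_all add: list_numbering_def flip_def numeral_eq_Suc upt_rec)

lemma strength_Q4: "strength (cube_V 4) (cube_E 4) = 21"
  by (rule strength_cube_eqI[OF _ _ _ str_f_cube4_ge, where
        g = "list_numbering [1, 15, 16, 3, 13, 6, 4, 14, 11, 2, 5, 9, 8, 12, 10, 7]"])
    (simp_all add: list_numbering_def flip_def numeral_eq_Suc upt_rec)

lemma strength_Q5: "strength (cube_V 5) (cube_E 5) = 40"
  by (rule strength_cube_eqI[OF _ _ _ str_f_cube5_ge, where
        g = "list_numbering [27, 6, 11, 29, 10, 30, 28, 8, 12, 25, 26, 2, 23, 7, 9, 31,
                             13, 22, 24, 4, 20, 5, 3, 32, 18, 15, 14, 21, 16, 19, 17, 1]"])
    (simp_all add: list_numbering_def flip_def numeral_eq_Suc upt_rec)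

theorem mainTheorem19:
  shows "strength (cube_V 2) (cube_E 2) = 6 \<and> strength (cube_V 3) (cube_E 3) = 11 \<and>
         strength (cube_V 4) (cube_E 4) = 21 \<and> strength (cube_V 5) (cube_E 5) = 40"
  using strength_Q2 strength_Q3 strength_Q4 strength_Q5 by blast

end
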